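(* Let $G$ be a graph, $h\geq 3$ a constant, $\Lambda>0$, and let $Y>0$ be any value (possibly depending on $n,h,\Lambda$). Fix a vertex $v$ with $t_G(v)\leq \Lambda/Y$ and a vector $P\in\mathsf{Product}_h(\Lambda)$. Then $v[P]\leq \frac{q}{Y}$, where $q=\frac{h!}{h^h}$.
   Context: An $h$-cycle is a cycle on $h$ distinct vertices; $t_G(v)$ is the number of $h$-cycles of $G$ containing $v$. Logarithms are base 2. $\mathsf{Product}_h(\Lambda)$ is the set of vectors $(p_1,\dots,p_h)\in[0,1]^h$ such that each $p_i\in\{2^{-j}: j \text{ an integer}, 0\leq j\leq \log(\Lambda)+1\}$ and $\prod_{i=1}^h p_i\leq 1/\Lambda$. For $P=(p_1,\dots,p_h)$, the $P$-discovery experiment is: sample a uniformly random coloring $\varphi:V(G)\to[h]$, keep each vertex of color class $i$ independently with probability $p_i$, and let $F$ be the induced subgraph on kept vertices; $v$ is $P$-discovered if $v$ lies on an $h$-cycle of $F$ whose vertices receive $h$ distinct colors. $v[P]$ is the probability that $v$ is $P$-discovered. *)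

theory Defs
  imports Complex_Main "HOL-Library.FuncSet"
begin

definition simple_graph :: "'a set \<Rightarrow> ('a \<Rightarrow> 'a \<Rightarrow> bool) \<Rightarrow> bool" where
  "simple_graph V E \<longleftrightarrow> finite V \<and> (\<forall>x y. E x y \<longrightarrow> x \<in> V \<and> y \<in> V)
     \<and> (\<forall>x y. E x y \<longrightarrow> E y x) \<and> (\<forall>x. \<not> E x x)"

text \<open>The h-cycles of the subgraph induced on V (vertex set V, adjacency E restricted to V),
  each cycle represented by its set of edges (edges = 2-element vertex sets).\<close>
definition hcycles :: "'a set \<Rightarrow> ('a \<Rightarrow> 'a \<Rightarrow> bool) \<Rightarrow> nat \<Rightarrow> 'a set set set" where
  "hcycles V E h = {C. \<exists>xs. length xs = h \<and> distinct xs \<and> set xs \<subseteq> V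
      \<and> (\<forall>i<h. E (xs ! i) (xs ! ((i + 1) mod h)))
      \<and> C = {{xs ! i, xs ! ((i + 1) mod h)} | i. i < h}}"

definition tG :: "'a set \<Rightarrow> ('a \<Rightarrow> 'a \<Rightarrow> bool) \<Rightarrow> nat \<Rightarrow> 'a \<Rightarrow> nat" where
  "tG V E h v = card {C \<in> hcycles V E h. v \<in> \<Union>C}"

definition Product :: "nat \<Rightarrow> real \<Rightarrow> (nat \<Rightarrow> real) set" where
  "Product h \<Lambda> = {p. (\<forall>i\<in>{1..h}. \<exists>j::int. 0 \<le> j \<and> real_of_int j \<le> log 2 \<Lambda> + 1
        \<and> p i = 2 powr (- real_of_int j))
      \<and> (\<Prod>i=1..h. p i) \<le> 1 / \<Lambda>}"

text \<open>v is discovered given coloring phi and the set S of kept vertices: v lies on an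
  h-cycle of the induced subgraph F = G[S] whose vertices get distinct colours.\<close>
definition discovered :: "('a \<Rightarrow> 'a \<Rightarrow> bool) \<Rightarrow> nat \<Rightarrow> ('a \<Rightarrow> nat) \<Rightarrow> 'a set \<Rightarrow> 'a \<Rightarrow> bool" where
  "discovered E h \<phi> S v \<longleftrightarrow> (\<exists>C\<in>hcycles S E h. v \<in> \<Union>C \<and> inj_on \<phi> (\<Union>C))"

text \<open>v[P]: probability of P-discovery. Colouring uniform over V \<rightarrow> {1..h};
  given the colouring, each vertex u is kept independently with probability p (phi u).\<close>
definition discovery_prob :: "'a set \<Rightarrow> ('a \<Rightarrow> 'a \<Rightarrow> bool) \<Rightarrow> nat \<Rightarrow> (nat \<Rightarrow> real) \<Rightarrow> 'a \<Rightarrow> real" where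
  "discovery_prob V E h p v =
     (\<Sum>\<phi>\<in>PiE V (\<lambda>_. {1..h}). \<Sum>S\<in>Pow V.
        (1 / real h ^ card V) * (\<Prod>u\<in>S. p (\<phi> u)) * (\<Prod>u\<in>V - S. 1 - p (\<phi> u))
        * (if discovered E h \<phi> S v then 1 else 0))"

end

theory Submission
  imports Defs
begin

text \<open>Union bound over the h-cycles through v. The vertex set U of such a cycle has h vertices,
  and the probability that all of U is kept and receives h distinct colours is exactly
  (h! / h^h) \<Prod>i p i, since the h! bijections U \<rightarrow> {1..h} each pick up every p i once.
  As \<Prod>i p i \<le> 1/\<Lambda> and there are t_G(v) \<le> \<Lambda>/Y such cycles, v[P] \<le> (h! / h^h) / Y.\<close>

lemma hcycle_vertices:
  assumes "C \<in> hcycles S E h" "h \<ge> 1"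
  shows "\<Union>C \<subseteq> S \<and> card (\<Union>C) = h"
proof -
  obtain xs where xs: "length xs = h" "distinct xs" "set xs \<subseteq> S"
     "C = {{xs ! i, xs ! ((i + 1) mod h)} | i. i < h}"
    using assms(1) unfolding hcycles_def by blast
  have "\<Union>C = set xs"
  proof
    show "\<Union>C \<subseteq> set xs" using xs assms(2) by (auto intro!: nth_mem mod_less_divisor)
    show "set xs \<subseteq> \<Union>C"
    proof
      fix x assume "x \<in> set xs"
      then obtain i where "i < h" "x = xs ! i" using xs(1) by (auto simp: in_set_conv_nth)
      then show "x \<in> \<Union>C" using xs(4) by blast
    qed
  qed
  then show ?thesis using xs by (simp add: distinct_card)
qed

lemma hcycles_mono: "S \<subseteq> V \<Longrightarrow> hcycles S E h \<subseteq> hcycles V E h"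
  unfolding hcycles_def by blast

lemma hcycles_subset_Pow_Pow: "hcycles V E h \<subseteq> Pow (Pow V)"
proof
  fix C assume "C \<in> hcycles V E h"
  then obtain xs where "length xs = h" "set xs \<subseteq> V"
     "C = {{xs ! i, xs ! ((i + 1) mod h)} | i. i < h}"
    unfolding hcycles_def by blast
  then show "C \<in> Pow (Pow V)" by (auto intro!: subsetD[OF _ nth_mem] mod_less_divisor)
qed

lemma finite_hcycles: "finite V \<Longrightarrow> finite (hcycles V E h)"
  using finite_subset[OF hcycles_subset_Pow_Pow] by blast

lemma Product_entries_le_one:
  assumes "p \<in> Product h \<Lambda>" "i \<in> {1..h}"
  shows "0 \<le> p i \<and> p i \<le> 1"
proof -
  obtain j :: int where "0 \<le> j" "p i = 2 powr (- real_of_int j)"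
    using assms unfolding Product_def by blast
  then show ?thesis using powr_mono[of "- real_of_int j" 0 2] by simp
qed

lemma Product_prod_bounds:
  assumes "p \<in> Product h \<Lambda>"
  shows "0 \<le> (\<Prod>i=1..h. p i) \<and> (\<Prod>i=1..h. p i) \<le> 1 / \<Lambda>"
proof
  show "0 \<le> (\<Prod>i=1..h. p i)"
    using Product_entries_le_one[OF assms] by (intro prod_nonneg) blast
  show "(\<Prod>i=1..h. p i) \<le> 1 / \<Lambda>"
    using assms unfolding Product_def by blast
qed

lemma discovered_colourful_hcycle:
  assumes "discovered E h \<phi> S v" "S \<subseteq> V" "h \<ge> 1"
  shows "\<exists>C\<in>hcycles V E h. v \<in> \<Union>C \<and> \<Union>C \<subseteq> S \<and> inj_on \<phi> (\<Union>C)"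
proof -
  obtain C where C: "C \<in> hcycles S E h" "v \<in> \<Union>C" "inj_on \<phi> (\<Union>C)"
    using assms(1) unfolding discovered_def by blast
  moreover have "C \<in> hcycles V E h" using hcycles_mono[OF assms(2)] C(1) ..
  moreover have "\<Union>C \<subseteq> S" using hcycle_vertices[OF C(1) assms(3)] ..
  ultimately show ?thesis by blast
qed

definition experiment_prob ::
    "'a set \<Rightarrow> nat \<Rightarrow> (nat \<Rightarrow> real) \<Rightarrow> (('a \<Rightarrow> nat) \<Rightarrow> 'a set \<Rightarrow> bool) \<Rightarrow> real" where
  "experiment_prob V h p Q =
     (\<Sum>\<phi>\<in>PiE V (\<lambda>_. {1..h}). \<Sum>S\<in>Pow V.
        (1 / real h ^ card V) * (\<Prod>u\<in>S. p (\<phi> u)) * (\<Prod>u\<in>V - S. 1 - p (\<phi> u))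
        * (if Q \<phi> S then 1 else 0))"

lemma discovery_prob_eq_experiment_prob:
  "discovery_prob V E h p v = experiment_prob V h p (\<lambda>\<phi> S. discovered E h \<phi> S v)"
  unfolding discovery_prob_def experiment_prob_def ..

lemma experiment_prob_union_bound:
  fixes R :: "'b \<Rightarrow> ('a \<Rightarrow> nat) \<Rightarrow> 'a set \<Rightarrow> bool"
  assumes p: "\<And>i. i \<in> {1..h} \<Longrightarrow> 0 \<le> p i \<and> p i \<le> 1"
    and "finite T"
    and cover: "\<And>\<phi> S. \<phi> \<in> PiE V (\<lambda>_. {1..h}) \<Longrightarrow> S \<subseteq> V \<Longrightarrow> Q \<phi> S \<Longrightarrow> \<exists>C\<in>T. R C \<phi> S"
  shows "experiment_prob V h p Q \<le> (\<Sum>C\<in>T. experiment_prob V h p (R C))"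
proof -
  define w where "w \<phi> S = (1 / real h ^ card V) * (\<Prod>u\<in>S. p (\<phi> u)) * (\<Prod>u\<in>V - S. 1 - p (\<phi> u))"
    for \<phi> :: "'a \<Rightarrow> nat" and S
  define ind where "ind b = (if b then 1 else (0::real))" for b
  have "w \<phi> S * ind (Q \<phi> S) \<le> w \<phi> S * (\<Sum>C\<in>T. ind (R C \<phi> S))"
    if \<phi>: "\<phi> \<in> PiE V (\<lambda>_. {1..h})" and S: "S \<in> Pow V" for \<phi> S
  proof (rule mult_left_mono)
    have "\<phi> u \<in> {1..h}" if "u \<in> V" for u using \<phi> that by auto
    then show "0 \<le> w \<phi> S"
      unfolding w_def using S p by (intro mult_nonneg_nonneg prod_nonneg) auto
    show "ind (Q \<phi> S) \<le> (\<Sum>C\<in>T. ind (R C \<phi> S))"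
    proof (cases "Q \<phi> S")
      case True
      then obtain C where "C \<in> T" "R C \<phi> S" using cover \<phi> S by blast
      then have "ind (R C \<phi> S) \<le> (\<Sum>C\<in>T. ind (R C \<phi> S))"
        using \<open>finite T\<close> by (intro member_le_sum) (auto simp: ind_def)
      then show ?thesis using True \<open>R C \<phi> S\<close> by (simp add: ind_def)
    qed (auto intro: sum_nonneg simp: ind_def)
  qed
  then have "experiment_prob V h p Q
      \<le> (\<Sum>\<phi>\<in>PiE V (\<lambda>_. {1..h}). \<Sum>S\<in>Pow V. \<Sum>C\<in>T. w \<phi> S * ind (R C \<phi> S))"
    unfolding experiment_prob_def w_def[symmetric] ind_def[symmetric] sum_distrib_left
    by (intro sum_mono) auto
  also have "\<dots> = (\<Sum>C\<in>T. experiment_prob V h p (R C))"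
    unfolding experiment_prob_def w_def[symmetric] ind_def[symmetric]
    by (subst sum.swap, rule sum.cong[OF refl], subst sum.swap) simp
  finally show ?thesis .
qed

text \<open>Expanding \<Prod>u\<in>V. (a u + g u) with g u = 0 on U and 1 - a u elsewhere.\<close>
lemma sum_Pow_prod_superset:
  fixes a :: "'a \<Rightarrow> real"
  assumes "finite V" "U \<subseteq> V"
  shows "(\<Sum>S\<in>Pow V. (\<Prod>u\<in>S. a u) * (\<Prod>u\<in>V - S. 1 - a u) * (if U \<subseteq> S then 1 else 0))
       = (\<Prod>u\<in>U. a u)"
proof -
  define g where "g u = (if u \<in> U then 0 else 1 - a u)" for u
  have summand: "(\<Prod>u\<in>S. a u) * (\<Prod>u\<in>V - S. 1 - a u) * (if U \<subseteq> S then 1 else 0)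
      = (\<Prod>u\<in>S. a u) * (\<Prod>u\<in>V - S. g u)" for S
  proof (cases "U \<subseteq> S")
    case True
    then have "(\<Prod>u\<in>V - S. g u) = (\<Prod>u\<in>V - S. 1 - a u)"
      by (intro prod.cong) (auto simp: g_def)
    then show ?thesis using True by simp
  next
    case False
    then have "(\<Prod>u\<in>V - S. g u) = 0"
      using assms by (intro prod_zero) (auto simp: g_def)
    then show ?thesis using False by simp
  qed
  have "(\<Sum>S\<in>Pow V. (\<Prod>u\<in>S. a u) * (\<Prod>u\<in>V - S. 1 - a u) * (if U \<subseteq> S then 1 else 0))
      = (\<Sum>S\<in>Pow V. (\<Prod>u\<in>S. a u) * (\<Prod>u\<in>V - S. g u))"
    by (rule sum.cong[OF refl]) (rule summand)
  also have "\<dots> = (\<Prod>u\<in>V. a u + g u)"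
    by (rule prod_add[OF assms(1), symmetric])
  also have "\<dots> = (\<Prod>u\<in>V. if u \<in> U then a u else 1)"
    by (rule prod.cong) (auto simp: g_def)
  also have "\<dots> = (\<Prod>u\<in>U. a u)"
    using assms by (simp add: prod.If_cases Int_absorb1)
  finally show ?thesis .
qed

lemma card_colourings_inj_on:
  assumes "finite V" "U \<subseteq> V" "card U = h"
  shows "card {\<phi> \<in> PiE V (\<lambda>_. {1..h}). inj_on \<phi> U} = h ^ (card V - h) * fact h"
  using card_inj_on_subset_funcset[OF assms(1) _ assms(2), of "{1..h}"] assms(3)
  by (simp add: fact_prod_rev)

lemma experiment_prob_colourful_kept:
  assumes "finite V" "U \<subseteq> V" "card U = h" "h \<ge> 1"
  shows "experiment_prob V h p (\<lambda>\<phi> S. U \<subseteq> S \<and> inj_on \<phi> U)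
       = (fact h / real h ^ h) * (\<Prod>i=1..h. p i)"
proof -
  define PP where "PP = (\<Prod>i=1..h. p i)"
  define c where "c = 1 / real h ^ card V"
  define A where "A = PiE V (\<lambda>_. {1..h})"
  have inner: "(\<Sum>S\<in>Pow V. c * (\<Prod>u\<in>S. p (\<phi> u)) * (\<Prod>u\<in>V - S. 1 - p (\<phi> u))
        * (if U \<subseteq> S \<and> inj_on \<phi> U then 1 else 0))
      = (if inj_on \<phi> U then c * PP else 0)" if "\<phi> \<in> A" for \<phi>
  proof (cases "inj_on \<phi> U")
    case True
    have "\<phi> ` U = {1..h}"
      using that assms(2,3) True by (intro card_subset_eq) (auto simp: A_def card_image)
    then have "(\<Prod>u\<in>U. p (\<phi> u)) = PP"
      using prod.reindex[OF True, of p] by (simp add: PP_def)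
    then show ?thesis
      using True sum_Pow_prod_superset[OF assms(1,2), of "\<lambda>u. p (\<phi> u)"]
      by (simp add: sum_distrib_left[symmetric] mult.assoc)
  qed simp
  have "experiment_prob V h p (\<lambda>\<phi> S. U \<subseteq> S \<and> inj_on \<phi> U)
      = (\<Sum>\<phi>\<in>A. if inj_on \<phi> U then c * PP else 0)"
    unfolding experiment_prob_def c_def[symmetric] A_def[symmetric] using inner by simp
  also have "\<dots> = real (card {\<phi> \<in> A. inj_on \<phi> U}) * c * PP"
    using assms(1) by (simp add: A_def sum.inter_filter[symmetric] finite_PiE mult.assoc)
  also have "\<dots> = (fact h / real h ^ h) * PP"
  proof -
    have "h \<le> card V" using assms card_mono by metis
    then have "real h ^ card V = real h ^ (card V - h) * real h ^ h"
      by (simp add: power_add[symmetric])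
    then show ?thesis
      using assms card_colourings_inj_on[OF assms(1-3)] by (simp add: A_def c_def)
  qed
  finally show ?thesis unfolding PP_def .
qed

theorem proposition3:
  fixes V :: "'a set" and E :: "'a \<Rightarrow> 'a \<Rightarrow> bool" and h :: nat
    and \<Lambda> Y :: real and v :: 'a and p :: "nat \<Rightarrow> real"
  assumes "simple_graph V E"
    and "h \<ge> 3"
    and "\<Lambda> > 0"
    and "Y > 0"
    and "v \<in> V"
    and "real (tG V E h v) \<le> \<Lambda> / Y"
    and "p \<in> Product h \<Lambda>"
  shows "discovery_prob V E h p v \<le> (fact h / real h ^ h) / Y"
proof -
  define q where "q = fact h / real h ^ h"
  define T where "T = {C \<in> hcycles V E h. v \<in> \<Union>C}"
  have "finite V" using assms(1) unfolding simple_graph_def by blast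
  then have "finite T" unfolding T_def by (simp add: finite_hcycles)
  have cycles: "\<Union>C \<subseteq> V \<and> card (\<Union>C) = h" if "C \<in> T" for C
    using that hcycle_vertices[of C V E h] assms(2) unfolding T_def by auto
  have "discovery_prob V E h p v
      \<le> (\<Sum>C\<in>T. experiment_prob V h p (\<lambda>\<phi> S. \<Union>C \<subseteq> S \<and> inj_on \<phi> (\<Union>C)))"
    unfolding discovery_prob_eq_experiment_prob
  proof (rule experiment_prob_union_bound[OF _ \<open>finite T\<close>])
    show "0 \<le> p i \<and> p i \<le> 1" if "i \<in> {1..h}" for i
      using Product_entries_le_one[OF assms(7) that] .
    show "\<exists>C\<in>T. \<Union>C \<subseteq> S \<and> inj_on \<phi> (\<Union>C)" if "S \<subseteq> V" "discovered E h \<phi> S v" for \<phi> S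
      using discovered_colourful_hcycle[OF that(2,1)] assms(2) unfolding T_def by auto
  qed
  also have "\<dots> = real (card T) * q * (\<Prod>i=1..h. p i)"
    using experiment_prob_colourful_kept[OF \<open>finite V\<close>] cycles assms(2) by (simp add: q_def)
  also have "\<dots> \<le> (\<Lambda> / Y) * q * (1 / \<Lambda>)"
    using assms(3,4,6) Product_prod_bounds[OF assms(7)] unfolding tG_def T_def[symmetric]
    by (intro mult_mono) (simp_all add: q_def)
  also have "\<dots> = q / Y" using assms(3) by simp
  finally show ?thesis unfolding q_def .
qed

end
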